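(* Let $J$ be a Jacobi matrix and $g_n,c_n$ as in the context. (i) If $\sum_{n=1}^\infty[|b_n|+|a_n^2-1|]<\infty$, then $u(z;J)=\lim_{n\to\infty}g_n(z)$ converges for all $z\in\overline{\mathbb{D}}\setminus\{\pm1\}$, uniformly on compact subsets of $\overline{\mathbb{D}}\setminus\{\pm1\}$; $u$ is analytic on $\mathbb{D}$ and continuous on $\overline{\mathbb{D}}\setminus\{\pm1\}$; and for $z\in\mathbb{D}$, $\lim_{n\to\infty}c_n(z)=\frac{u(z;J)}{1-z^2}$. (ii) If $\sum_{n=1}^\infty n[|b_n|+|a_n^2-1|]<\infty$, then $\lim_n g_n(z)$ converges for all $z\in\overline{\mathbb{D}}$, uniformly there, and $u$ is continuous on $\overline{\mathbb{D}}$. (iii) If $|b_n|+|a_n^2-1|\le CR^{-2n}$ for some $C$ and $R>1$, then $\lim_n g_n(z)$ converges for $z\in\{|z|<R\}$, uniformly on compact subsets.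
   Context: $J$ is a Jacobi matrix with diagonal entries $b_n\in\mathbb{R}$ and off-diagonal entries $a_n>0$ ($n\ge1$); set $a_0=1$. The orthonormal polynomials satisfy $p_{-1}=0$, $p_0=1$, $xp_n(x)=a_{n+1}p_{n+1}(x)+b_{n+1}p_n(x)+a_np_{n-1}(x)$. Define $c_n(z)=z^np_n(z+z^{-1})$ and $g_n(z)=z^n\bigl(p_n(z+z^{-1})-a_nzp_{n-1}(z+z^{-1})\bigr)$. $\mathbb{D}=\{|z|<1\}$. *)

theory Defs
  imports "HOL-Analysis.Analysis"
begin

text \<open>Orthonormal polynomials p_n of the Jacobi matrix with diagonal b_n and
  off-diagonal a_n (n >= 1), evaluated at a complex point x.
  Recurrence: x p_n = a_(n+1) p_(n+1) + b_(n+1) p_n + a_n p_(n-1), p_(-1)=0, p_0=1.\<close>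
fun opoly :: "(nat \<Rightarrow> real) \<Rightarrow> (nat \<Rightarrow> real) \<Rightarrow> nat \<Rightarrow> complex \<Rightarrow> complex" where
  "opoly a b 0 x = 1"
| "opoly a b (Suc 0) x = (x - of_real (b 1)) / of_real (a 1)"
| "opoly a b (Suc (Suc n)) x =
     ((x - of_real (b (n+2))) * opoly a b (Suc n) x - of_real (a (n+1)) * opoly a b n x)
       / of_real (a (n+2))"

text \<open>c_n(z) = z^n p_n(z + 1/z), as the polynomial in z it is (so that it is also
  correctly defined at z = 0).  Obtained by multiplying the recurrence by z^(n+2).\<close>
fun cpoly :: "(nat \<Rightarrow> real) \<Rightarrow> (nat \<Rightarrow> real) \<Rightarrow> nat \<Rightarrow> complex \<Rightarrow> complex" where
  "cpoly a b 0 z = 1"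
| "cpoly a b (Suc 0) z = (z^2 + 1 - of_real (b 1) * z) / of_real (a 1)"
| "cpoly a b (Suc (Suc n)) z =
     ((z^2 + 1 - of_real (b (n+2)) * z) * cpoly a b (Suc n) z
        - of_real (a (n+1)) * z^2 * cpoly a b n z) / of_real (a (n+2))"

text \<open>g_n(z) = z^n (p_n(z+1/z) - a_n z p_(n-1)(z+1/z)) = c_n(z) - a_n z^2 c_(n-1)(z), g_0 = 1.\<close>
definition gpoly :: "(nat \<Rightarrow> real) \<Rightarrow> (nat \<Rightarrow> real) \<Rightarrow> nat \<Rightarrow> complex \<Rightarrow> complex" where
  "gpoly a b n z = (if n = 0 then 1
      else cpoly a b n z - of_real (a n) * z^2 * cpoly a b (n - 1) z)"

lemma cpoly_eq:
  "z \<noteq> 0 \<Longrightarrow> cpoly a b n z = z^n * opoly a b n (z + inverse z)"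
proof (induction a b n z rule: cpoly.induct)
  case (1 a b z) then show ?case by simp
next
  case (2 a b z) then show ?case by (cases "a 1 = 0") (simp_all add: field_simps power2_eq_square)
next
  case (3 a b n z)
  then show ?case
    by (cases "a (n+2) = 0") (simp_all only: cpoly.simps opoly.simps, simp_all add: field_simps power2_eq_square)
qed

end

theory Submission
  imports Defs "HOL-Complex_Analysis.Cauchy_Integral_Formula"
begin

(*
  Put w = z^2 and eps_n = |b_(n+1)| + |a_(n+1)^2 - 1|.  The three-term recurrence gives
  c_(n+1) = (g_n + (w - b_(n+1) z) c_n) / a_(n+1) and g_(n+1) = c_(n+1) - a_(n+1) w c_n, so for
  bounded z both g_(n+1) - g_n and c_(n+1) - w c_n - g_n are O(eps_n (|g_n| + |c_n|)).
  Summation by parts in c_(n+1) = w c_n + g_n + (error) bounds |c_n| by L_n (1 + sum of errors),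
  where L_n bounds the geometric sums 1 + w + ... + w^m, m <= n.  A discrete Gronwall argument
  then bounds g_n and c_n / L_n uniformly as soon as sum eps_n (1 + L_n) < oo, and the
  Weierstrass M-test gives uniform convergence of g_n = 1 + sum_(k<n) (g_(k+1) - g_k).
  One may take L_n = 2 / |1 - w| away from z = 1, -1 (i), L_n = n + 1 on the closed disk (ii)
  and L_n = (n + 1) rho^(2n) on |z| <= rho (iii).  Finally, for |z| < 1 the convergence
  c_(n+1) - w c_n -> u(z) forces c_n -> u(z) / (1 - w).
*)

section \<open>Elementary estimates\<close>

lemma norm_le_norm_0_plus_sum_norm_diff:
  fixes f :: "nat \<Rightarrow> 'a::real_normed_vector"
  shows "norm (f n) \<le> norm (f 0) + (\<Sum>k<n. norm (f (Suc k) - f k))"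
proof (induction n)
  case (Suc n)
  then show ?case
    using norm_triangle_sub[of "f (Suc n)" "f n"] by simp
qed simp

lemma discrete_gronwall:
  fixes Q \<beta> :: "nat \<Rightarrow> real"
  assumes "0 \<le> Q 0" "\<And>n. 0 \<le> \<beta> n" "\<And>n. Q (Suc n) \<le> (1 + \<beta> n) * Q n"
  shows "Q n \<le> Q 0 * exp (\<Sum>k<n. \<beta> k)"
proof (induction n)
  case (Suc n)
  have "Q (Suc n) \<le> (1 + \<beta> n) * (Q 0 * exp (\<Sum>k<n. \<beta> k))"
    using assms(2,3)[of n] Suc by (smt (verit) mult_left_mono)
  also have "\<dots> \<le> exp (\<beta> n) * (Q 0 * exp (\<Sum>k<n. \<beta> k))"
    using assms(1) by (intro mult_right_mono) (auto simp: add.commute)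
  finally show ?case
    by (simp add: exp_add algebra_simps)
qed simp

lemma sum_lessThan_shift_le:
  fixes e :: "nat \<Rightarrow> real"
  assumes "\<And>j. 0 \<le> e j"
  shows "(\<Sum>j<n. if j = 0 then 0 else e (j - 1)) \<le> (\<Sum>j<n. e j)"
proof (cases n)
  case (Suc m)
  have "(\<Sum>j<n. if j = 0 then 0 else e (j - 1)) = (\<Sum>j<m. e j)"
    unfolding Suc sum.lessThan_Suc_shift by simp
  also have "\<dots> \<le> (\<Sum>j<n. e j)"
    unfolding Suc using assms by simp
  finally show ?thesis .
qed simp

lemma geometric_sum_Suc: "(\<Sum>i\<le>Suc m. (w::'a::comm_ring_1)^i) = 1 + w * (\<Sum>i\<le>m. w^i)"
  by (simp add: sum.atMost_Suc_shift sum_distrib_left del: sum.atMost_Suc)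

lemma first_order_recurrence_summation_by_parts:
  fixes c :: "nat \<Rightarrow> 'a::comm_ring_1" and w :: 'a
  assumes "c 0 = 1"
  defines "x \<equiv> \<lambda>j. if j = 0 then 1 else c j - w * c (j - 1)"
  shows "c n = (\<Sum>i\<le>n. w^i) + (\<Sum>j<n. (x (Suc j) - x j) * (\<Sum>i\<le>n - Suc j. w^i))"
proof (induction n)
  case 0
  then show ?case
    using assms by simp
next
  case (Suc n)
  define S where "S m = (\<Sum>i\<le>m. w^i)" for m
  define d where "d j = x (Suc j) - x j" for j
  have IH: "c n = S n + (\<Sum>j<n. d j * S (n - Suc j))"
    using Suc unfolding S_def d_def by simp
  have S_Suc: "w * S m = S (Suc m) - 1" for m
    unfolding S_def using geometric_sum_Suc[of w m] by simp
  have "(\<Sum>j<n. d j) = x n - 1"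
    unfolding d_def using sum_lessThan_telescope[of x n] by (simp add: x_def)
  have "w * (\<Sum>j<n. d j * S (n - Suc j)) = (\<Sum>j<n. d j * (w * S (n - Suc j)))"
    by (simp add: sum_distrib_left algebra_simps)
  also have "\<dots> = (\<Sum>j<n. d j * (S (Suc n - Suc j) - 1))"
    by (intro sum.cong refl) (simp add: S_Suc Suc_diff_Suc)
  also have "\<dots> = (\<Sum>j<n. d j * S (Suc n - Suc j)) - (x n - 1)"
    using \<open>(\<Sum>j<n. d j) = x n - 1\<close> by (simp add: algebra_simps sum_subtractf)
  finally have shift: "w * (\<Sum>j<n. d j * S (n - Suc j)) = (\<Sum>j<n. d j * S (Suc n - Suc j)) - (x n - 1)" .
  have "c (Suc n) = w * S n + w * (\<Sum>j<n. d j * S (n - Suc j)) + x (Suc n)"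
    using IH by (simp add: x_def algebra_simps)
  also have "\<dots> = S (Suc n) + ((\<Sum>j<n. d j * S (Suc n - Suc j)) + d n * S 0)"
    unfolding shift S_Suc by (simp add: d_def S_def algebra_simps)
  also have "\<dots> = S (Suc n) + (\<Sum>j<Suc n. d j * S (Suc n - Suc j))"
    by simp
  finally show ?case
    unfolding S_def d_def .
qed

(* Summation by parts: the increments of x_j = c_j - w c_(j-1) are bounded by the errors. *)
lemma norm_first_order_recurrence_le:
  fixes c g :: "nat \<Rightarrow> 'a::real_normed_field"
  assumes c0: "c 0 = 1" and g0: "g 0 = 1"
    and L: "\<And>m. m \<le> n \<Longrightarrow> norm (\<Sum>i\<le>m. w^i) \<le> L"
  shows "norm (c n)
    \<le> L * (1 + 2 * (\<Sum>k<n. norm (g (Suc k) - g k) + norm (c (Suc k) - w * c k - g k)))"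
proof -
  define x where "x j = (if j = 0 then 1 else c j - w * c (j - 1))" for j
  define h where "h k = c (Suc k) - w * c k - g k" for k
  define e where "e k = norm (g (Suc k) - g k) + norm (h k)" for k
  have dx: "norm (x (Suc j) - x j) \<le> e j + (if j = 0 then 0 else e (j - 1))" for j
  proof (cases j)
    case 0
    then show ?thesis
      using c0 g0 by (simp add: x_def e_def h_def)
  next
    case (Suc i)
    have "norm (x (Suc j) - x j) = norm ((h j + (g (Suc i) - g i)) - h i)"
      by (simp add: x_def h_def Suc algebra_simps)
    also have "\<dots> \<le> norm (h j) + norm (g (Suc i) - g i) + norm (h i)"
      using norm_triangle_ineq4[of "h j + (g (Suc i) - g i)" "h i"]
        norm_triangle_ineq[of "h j" "g (Suc i) - g i"] by linarith
    finally have "norm (x (Suc j) - x j) \<le> e j + e i"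
      using norm_ge_zero[of "g (Suc j) - g j"] unfolding e_def Suc by linarith
    then show ?thesis
      using Suc by simp
  qed
  have "(\<Sum>j<n. norm (x (Suc j) - x j)) \<le> (\<Sum>j<n. e j) + (\<Sum>j<n. if j = 0 then 0 else e (j - 1))"
    using sum_mono[OF dx] by (simp add: sum.distrib)
  also have "(\<Sum>j<n. if j = 0 then 0 else e (j - 1)) \<le> (\<Sum>j<n. e j)"
    by (rule sum_lessThan_shift_le) (simp add: e_def)
  finally have sum_dx: "(\<Sum>j<n. norm (x (Suc j) - x j)) \<le> 2 * (\<Sum>k<n. e k)"
    by simp
  have "norm (c n) \<le> norm (\<Sum>i\<le>n. w^i) + (\<Sum>j<n. norm (x (Suc j) - x j) * norm (\<Sum>i\<le>n - Suc j. w^i))"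
    unfolding first_order_recurrence_summation_by_parts[where c = c and w = w and n = n, OF c0, folded x_def] norm_mult[symmetric]
    by (rule order_trans[OF norm_triangle_ineq add_left_mono[OF norm_sum]])
  also have "\<dots> \<le> L + (\<Sum>j<n. norm (x (Suc j) - x j) * L)"
    by (intro add_mono sum_mono mult_left_mono L) auto
  also have "\<dots> = L * (1 + (\<Sum>j<n. norm (x (Suc j) - x j)))"
    by (simp add: sum_distrib_left algebra_simps)
  also have "\<dots> \<le> L * (1 + 2 * (\<Sum>k<n. e k))"
    using sum_dx L[of 0] by (intro mult_left_mono) auto
  finally show ?thesis
    unfolding e_def h_def .
qed

lemma norm_coupled_recurrence_le:
  fixes c g :: "nat \<Rightarrow> 'a::real_normed_field" and L \<eta> :: "nat \<Rightarrow> real"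
  assumes c0: "c 0 = 1" and g0: "g 0 = 1"
    and L: "\<And>m n. m \<le> n \<Longrightarrow> norm (\<Sum>i\<le>m. w^i) \<le> L n"
    and \<eta>: "\<And>k. 0 \<le> \<eta> k"
    and step: "\<And>k. norm (g (Suc k) - g k) + norm (c (Suc k) - w * c k - g k) \<le> \<eta> k * (norm (g k) + norm (c k))"
  shows "norm (g n) \<le> exp (\<Sum>k<n. 2 * \<eta> k * (1 + L k))"
    and "norm (c n) \<le> L n * exp (\<Sum>k<n. 2 * \<eta> k * (1 + L k))"
proof -
  define e where "e k = norm (g (Suc k) - g k) + norm (c (Suc k) - w * c k - g k)" for k
  \<comment> \<open>Q dominates both |g_k| and |c_k| / L_k and grows by at most the factor 1 + 2 eta_k (1 + L_k).\<close>
  define Q where "Q k = 1 + 2 * (\<Sum>j<k. e j)" for k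
  have L1: "1 \<le> L k" for k
    using L[of 0 k] by simp
  have gQ: "norm (g k) \<le> Q k" for k
  proof -
    have "norm (g k) \<le> 1 + (\<Sum>j<k. norm (g (Suc j) - g j))"
      using norm_le_norm_0_plus_sum_norm_diff[of g k] g0 by simp
    also have "\<dots> \<le> Q k"
      unfolding Q_def e_def by (simp add: sum.distrib sum_nonneg)
    finally show ?thesis .
  qed
  have cQ: "norm (c k) \<le> L k * Q k" for k
    using norm_first_order_recurrence_le[where c = c and g = g and n = k and L = "L k", OF c0 g0 L]
    by (simp add: Q_def e_def)
  have "Q (Suc k) \<le> (1 + 2 * \<eta> k * (1 + L k)) * Q k" for k
  proof -
    have "e k \<le> \<eta> k * (Q k + L k * Q k)"
      using step[of k] gQ[of k] cQ[of k] \<eta>[of k] unfolding e_def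
      by (meson add_mono mult_left_mono order_trans)
    then show ?thesis
      by (simp add: Q_def algebra_simps)
  qed
  moreover have "0 \<le> \<eta> k * (1 + L k)" for k
    using \<eta>[of k] L1[of k] by simp
  ultimately have "Q n \<le> exp (\<Sum>k<n. 2 * \<eta> k * (1 + L k))"
    using discrete_gronwall[of Q "\<lambda>k. 2 * \<eta> k * (1 + L k)" n] by (simp add: Q_def)
  then show "norm (g n) \<le> exp (\<Sum>k<n. 2 * \<eta> k * (1 + L k))"
    and "norm (c n) \<le> L n * exp (\<Sum>k<n. 2 * \<eta> k * (1 + L k))"
    using gQ[of n] cQ[of n] L1[of n] by (auto intro: order_trans mult_left_mono)
qed

lemma tendsto_zero_of_contracting_recurrence:
  fixes e :: "nat \<Rightarrow> 'a::real_normed_field"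
  assumes w: "norm w < 1" and lim: "(\<lambda>n. e (Suc n) - w * e n) \<longlonglongrightarrow> 0"
  shows "e \<longlonglongrightarrow> 0"
proof (rule LIMSEQ_I)
  fix \<epsilon> :: real
  assume "0 < \<epsilon>"
  define r where "r = norm w"
  have r: "0 \<le> r" "r < 1"
    using w by (auto simp: r_def)
  obtain N where N: "\<And>n. N \<le> n \<Longrightarrow> norm (e (Suc n) - w * e n) < \<epsilon> / 2 * (1 - r)"
    using LIMSEQ_D[OF lim, of "\<epsilon> / 2 * (1 - r)"] \<open>0 < \<epsilon>\<close> r by auto
  have tail: "norm (e (N + m)) \<le> r^m * norm (e N) + \<epsilon> / 2" for m
  proof (induction m)
    case (Suc m)
    have "norm (e (N + Suc m)) \<le> r * norm (e (N + m)) + \<epsilon> / 2 * (1 - r)"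
      using N[of "N + m"] norm_triangle_ineq[of "w * e (N + m)" "e (Suc (N + m)) - w * e (N + m)"]
      by (simp add: r_def norm_mult)
    also have "\<dots> \<le> r * (r^m * norm (e N) + \<epsilon> / 2) + \<epsilon> / 2 * (1 - r)"
      using Suc r by (intro add_right_mono mult_left_mono) auto
    finally show ?case
      by (simp add: field_simps)
  qed (use \<open>0 < \<epsilon>\<close> in simp)
  have "(\<lambda>m. r^m * norm (e N)) \<longlonglongrightarrow> 0"
    using r by (intro tendsto_mult_left_zero LIMSEQ_power_zero) auto
  then obtain m0 where m0: "\<And>m. m0 \<le> m \<Longrightarrow> r^m * norm (e N) < \<epsilon> / 2"
    using LIMSEQ_D[of _ 0 "\<epsilon> / 2"] \<open>0 < \<epsilon>\<close> r by fastforce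
  show "\<exists>n0. \<forall>n\<ge>n0. norm (e n - 0) < \<epsilon>"
  proof (intro exI allI impI)
    fix n
    assume "N + m0 \<le> n"
    then have "m0 \<le> n - N" "N + (n - N) = n"
      by simp_all
    then show "norm (e n - 0) < \<epsilon>"
      using tail[of "n - N"] m0[of "n - N"] by simp
  qed
qed

lemma tendsto_of_first_order_recurrence:
  fixes c :: "nat \<Rightarrow> 'a::real_normed_field"
  assumes w: "norm w < 1" and lim: "(\<lambda>n. c (Suc n) - w * c n) \<longlonglongrightarrow> h"
  shows "c \<longlonglongrightarrow> h / (1 - w)"
proof -
  define q where "q = h / (1 - w)"
  have "1 - w \<noteq> 0"
    using w by auto
  then have "h = (1 - w) * q"
    by (simp add: q_def)
  have "(\<lambda>n. c (Suc n) - w * c n - h) \<longlonglongrightarrow> 0"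
    using lim by (rule LIM_zero)
  moreover have "c (Suc n) - w * c n - h = (c (Suc n) - q) - w * (c n - q)" for n
    unfolding \<open>h = (1 - w) * q\<close> by (simp add: algebra_simps)
  ultimately have "(\<lambda>n. (c (Suc n) - q) - w * (c n - q)) \<longlonglongrightarrow> 0"
    by simp
  then have "(\<lambda>n. c n - q) \<longlonglongrightarrow> 0"
    by (rule tendsto_zero_of_contracting_recurrence[OF w])
  then show ?thesis
    unfolding q_def by (rule LIM_zero_cancel)
qed

lemma norm_geometric_sum_le_of_norm_le_1:
  fixes w :: "'a::real_normed_field"
  assumes "norm w \<le> 1" "0 < d" "d \<le> norm (1 - w)"
  shows "norm (\<Sum>i\<le>m. w^i) \<le> 2 / d"
proof -
  have "w \<noteq> 1"
    using assms by auto
  then have "norm (\<Sum>i\<le>m. w^i) = norm (1 - w^Suc m) / norm (1 - w)"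
    by (simp add: sum_gp0 norm_divide)
  also have "\<dots> \<le> 2 / d"
  proof (rule frac_le)
    have "norm (w^Suc m) \<le> 1"
      unfolding norm_power using assms(1) by (intro power_le_one) auto
    then show "norm (1 - w^Suc m) \<le> 2"
      using norm_triangle_ineq4[of 1 "w^Suc m"] by simp
  qed (use assms in auto)
  finally show ?thesis .
qed

lemma norm_geometric_sum_le_power:
  fixes w :: "'a::real_normed_div_algebra"
  assumes "norm w \<le> r" "1 \<le> r" "m \<le> n"
  shows "norm (\<Sum>i\<le>m. w^i) \<le> real (Suc n) * r^n"
proof -
  have "norm (\<Sum>i\<le>m. w^i) \<le> (\<Sum>i\<le>m. r^n)"
  proof (rule order_trans[OF norm_sum sum_mono])
    fix i
    assume "i \<in> {..m}"
    then have "norm w ^ i \<le> r ^ n"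
      using assms by (meson atMost_iff norm_ge_zero order_trans power_increasing power_mono)
    then show "norm (w^i) \<le> r^n"
      by (simp add: norm_power)
  qed
  also have "\<dots> \<le> real (Suc n) * r^n"
    using assms by (simp add: mult_right_mono)
  finally show ?thesis .
qed

lemma summable_Suc_times_power:
  fixes x :: real
  assumes "\<bar>x\<bar> < 1"
  shows "summable (\<lambda>n. real (Suc n) * x^n)"
proof -
  have "summable (\<lambda>n. diffs (\<lambda>_. 1::real) n * x^n)"
    by (rule termdiff_converges[of x 1]) (use assms in \<open>auto intro: summable_geometric\<close>)
  then show ?thesis
    by (simp add: diffs_def)
qed

lemma summable_mult_Suc_power_weight:
  fixes \<epsilon> :: "nat \<Rightarrow> real"
  assumes "\<And>n. 0 \<le> \<epsilon> n" "\<And>n. \<epsilon> n \<le> C * q^Suc n" "0 \<le> q" "1 \<le> x" "x * q < 1"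
  shows "summable (\<lambda>n. \<epsilon> n * (1 + real (Suc n) * x^n))"
proof (rule summable_comparison_test'[OF summable_mult[OF summable_Suc_times_power[of "x * q"]]])
  show "\<bar>x * q\<bar> < 1"
    using assms by simp
  fix n
  define W where "W = real (Suc n) * x^n"
  have "1 \<le> W"
    using mult_mono[of 1 "real (Suc n)" 1 "x^n"] one_le_power[OF assms(4)] by (simp add: W_def)
  then have "norm (\<epsilon> n * (1 + W)) \<le> \<epsilon> n * (2 * W)"
    using assms(1)[of n] by (simp add: mult_left_mono)
  also have "\<dots> \<le> C * q^Suc n * (2 * W)"
    using assms(2) \<open>1 \<le> W\<close> by (intro mult_right_mono) auto
  also have "\<dots> = 2 * C * q * (real (Suc n) * (x * q)^n)"
    by (simp add: W_def power_mult_distrib algebra_simps)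
  finally show "norm (\<epsilon> n * (1 + real (Suc n) * x^n)) \<le> 2 * C * q * (real (Suc n) * (x * q)^n)"
    by (simp add: W_def)
qed

lemma powr_minus_two_mult:
  fixes R :: real
  assumes "0 < R"
  shows "R powr (- 2 * real n) = (1 / R^2)^n"
  using assms by (simp add: powr_minus powr_realpow power_mult power_one_over inverse_eq_divide flip: powr_powr)

lemma compact_norm_bounded_below:
  fixes f :: "'a::topological_space \<Rightarrow> 'b::real_normed_vector"
  assumes "compact K" "continuous_on K f" "\<And>z. z \<in> K \<Longrightarrow> f z \<noteq> 0"
  obtains d where "0 < d" "\<And>z. z \<in> K \<Longrightarrow> d \<le> norm (f z)"
proof (cases "K = {}")
  case False
  obtain z0 where "z0 \<in> K" "\<And>y. y \<in> K \<Longrightarrow> norm (f z0) \<le> norm (f y)"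
    using continuous_attains_inf[OF assms(1) False continuous_on_norm[OF assms(2)]] by blast
  then show ?thesis
    using that[of "norm (f z0)"] assms(3) by auto
qed (use that[of 1] in auto)

lemma compact_subset_ball_imp_subset_smaller_cball:
  fixes K :: "'a::metric_space set"
  assumes "compact K" "K \<subseteq> ball x R"
  obtains r where "r < R" "K \<subseteq> cball x r"
proof (cases "K = {}")
  case False
  have "continuous_on K (dist x)"
    by (intro continuous_intros)
  then obtain z0 where "z0 \<in> K" "\<And>y. y \<in> K \<Longrightarrow> dist x y \<le> dist x z0"
    using continuous_attains_sup[OF assms(1) False] by blast
  then show ?thesis
    using assms(2) by (intro that[of "dist x z0"]) auto
qed (use that[of "R - 1"] in auto)

lemma continuous_on_uniform_limit_on_compacts:
  fixes f :: "nat \<Rightarrow> 'a::metric_space \<Rightarrow> 'b::metric_space"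
  assumes cont: "\<And>n. continuous_on S (f n)"
    and ulim: "\<And>K. compact K \<Longrightarrow> K \<subseteq> S \<Longrightarrow> uniform_limit K f u sequentially"
    and loc: "\<And>x. x \<in> S \<Longrightarrow> \<exists>\<delta>>0. compact (S \<inter> cball x \<delta>)"
  shows "continuous_on S u"
  unfolding continuous_on_eq_continuous_within
proof
  fix x
  assume "x \<in> S"
  then obtain \<delta> where \<delta>: "0 < \<delta>" "compact (S \<inter> cball x \<delta>)"
    using loc by blast
  have "continuous_on (S \<inter> cball x \<delta>) u"
    using ulim[OF \<delta>(2)] continuous_on_subset[OF cont]
    by (intro uniform_limit_theorem[where F = sequentially]) (auto intro!: always_eventually)
  then have "continuous (at x within S \<inter> cball x \<delta>) u"
    using \<open>x \<in> S\<close> \<delta>(1) by (simp add: continuous_on_eq_continuous_within)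
  moreover have "at x within S = at x within S \<inter> cball x \<delta>"
    using \<delta>(1) by (intro at_within_nhd[of x "ball x \<delta>"]) auto
  ultimately show "continuous (at x within S) u"
    by simp
qed

lemma one_div_le_imp_nonneg:
  fixes a M :: real
  assumes "0 < a" "1 / a \<le> M"
  shows "0 \<le> M"
  using assms by (auto intro: order_trans[of 0 "1 / a"])

lemma abs_one_minus_le_abs_square_minus_one:
  fixes a :: real
  assumes "0 < a"
  shows "\<bar>1 - a\<bar> \<le> \<bar>a^2 - 1\<bar>"
proof -
  have "a^2 - 1 = (a - 1) * (1 + a)"
    by (simp add: power2_eq_square algebra_simps)
  then have "\<bar>a^2 - 1\<bar> = \<bar>1 - a\<bar> * (1 + a)"
    using assms by (simp add: abs_mult abs_minus_commute)
  then show ?thesis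
    using assms by (simp add: mult_le_cancel_left1)
qed

lemma abs_inverse_minus_one_le:
  fixes a :: real
  assumes "0 < a" "1 / a \<le> M"
  shows "\<bar>1 / a - 1\<bar> \<le> M * \<bar>a^2 - 1\<bar>"
proof -
  have "\<bar>1 / a - 1\<bar> = (1 / a) * \<bar>1 - a\<bar>"
    using assms by (simp add: field_simps abs_div)
  also have "\<dots> \<le> M * \<bar>a^2 - 1\<bar>"
    using assms abs_one_minus_le_abs_square_minus_one[of a]
    by (intro mult_mono) (auto intro: one_div_le_imp_nonneg)
  finally show ?thesis .
qed

section \<open>The recurrences for c_n and g_n\<close>

definition jacobi_defect :: "(nat \<Rightarrow> real) \<Rightarrow> (nat \<Rightarrow> real) \<Rightarrow> nat \<Rightarrow> real" where
  "jacobi_defect a b n = \<bar>b (Suc n)\<bar> + \<bar>a (Suc n)^2 - 1\<bar>"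

lemma jacobi_defect_nonneg: "0 \<le> jacobi_defect a b n"
  by (simp add: jacobi_defect_def)

lemma gpoly_0 [simp]: "gpoly a b 0 z = 1"
  by (simp add: gpoly_def)

lemma gpoly_Suc: "gpoly a b (Suc n) z = cpoly a b (Suc n) z - of_real (a (Suc n)) * z^2 * cpoly a b n z"
  by (simp add: gpoly_def)

lemma cpoly_Suc:
  assumes "a (Suc n) \<noteq> 0"
  shows "cpoly a b (Suc n) z =
    (gpoly a b n z + (z^2 - of_real (b (Suc n)) * z) * cpoly a b n z) / of_real (a (Suc n))"
  using assms by (cases n) (simp_all add: gpoly_def field_simps power2_eq_square)

lemma holomorphic_cpoly: "cpoly a b n holomorphic_on A"
proof -
  have "cpoly a b n holomorphic_on UNIV \<and> cpoly a b (Suc n) holomorphic_on UNIV"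
  proof (induction n)
    case (Suc n)
    have "(\<lambda>z. ((z^2 + 1 - of_real (b (n+2)) * z) * cpoly a b (Suc n) z
        - of_real (a (n+1)) * z^2 * cpoly a b n z) / of_real (a (n+2))) holomorphic_on UNIV"
      using Suc by (auto intro!: holomorphic_intros)
    then show ?case
      using Suc by (simp add: numeral_2_eq_2)
  qed (auto intro!: holomorphic_intros)
  then show ?thesis
    using holomorphic_on_subset by blast
qed

lemma holomorphic_gpoly: "gpoly a b n holomorphic_on A"
  unfolding gpoly_def by (cases "n = 0") (auto intro!: holomorphic_intros holomorphic_cpoly)

lemma continuous_on_gpoly: "continuous_on A (gpoly a b n)"
  by (rule holomorphic_on_imp_continuous_on[OF holomorphic_gpoly])

(* The common shape of g_(n+1) - g_n (with t = 1 - a^2) and of c_(n+1) - z^2 c_n - g_n (with t = 1 - a). *)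
lemma norm_jacobi_step_le:
  fixes a \<beta> t \<rho> M :: real and z g c :: complex
  assumes a: "0 < a" "1 / a \<le> M" and z: "cmod z \<le> \<rho>" and t: "\<bar>t\<bar> \<le> \<bar>a^2 - 1\<bar>"
  shows "cmod (g * of_real (1 / a - 1) + c * ((z^2 * of_real t - of_real \<beta> * z) / of_real a))
    \<le> M * (1 + \<rho> + \<rho>^2) * (\<bar>\<beta>\<bar> + \<bar>a^2 - 1\<bar>) * (cmod g + cmod c)"
proof -
  define E where "E = \<bar>\<beta>\<bar> + \<bar>a^2 - 1\<bar>"
  have \<rho>: "0 \<le> \<rho>"
    using z norm_ge_zero order_trans by blast
  have M: "0 \<le> M"
    using one_div_le_imp_nonneg[OF a] .
  have E: "\<bar>a^2 - 1\<bar> \<le> E" "\<bar>\<beta>\<bar> \<le> E" "E \<le> (1 + \<rho> + \<rho>^2) * E"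
    using \<rho> by (auto simp: E_def algebra_simps)
  have coeff_g: "cmod (of_real (1 / a - 1)) \<le> M * (1 + \<rho> + \<rho>^2) * E"
  proof -
    have "cmod (of_real (1 / a - 1)) \<le> M * \<bar>a^2 - 1\<bar>"
      using abs_inverse_minus_one_le[OF a] by (simp only: norm_of_real)
    also have "\<dots> \<le> M * ((1 + \<rho> + \<rho>^2) * E)"
      using E M by (intro mult_left_mono) auto
    finally show ?thesis
      by (simp add: mult.assoc)
  qed
  have coeff_c: "cmod ((z^2 * of_real t - of_real \<beta> * z) / of_real a) \<le> M * (1 + \<rho> + \<rho>^2) * E"
  proof -
    have "cmod (z^2 * of_real t - of_real \<beta> * z) \<le> cmod z ^ 2 * \<bar>t\<bar> + \<bar>\<beta>\<bar> * cmod z"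
      by (rule order_trans[OF norm_triangle_ineq4]) (simp add: norm_mult norm_power)
    also have "\<dots> \<le> \<rho>^2 * E + E * \<rho>"
      using z t E \<rho> by (intro add_mono mult_mono power_mono) auto
    also have "\<dots> \<le> (1 + \<rho> + \<rho>^2) * E"
      using E \<rho> by (simp add: algebra_simps)
    finally have "cmod (z^2 * of_real t - of_real \<beta> * z) * (1 / a) \<le> (1 + \<rho> + \<rho>^2) * E * M"
      using a \<rho> E by (intro mult_mono) auto
    then show ?thesis
      using a by (simp add: norm_divide algebra_simps)
  qed
  have "cmod (g * of_real (1 / a - 1) + c * ((z^2 * of_real t - of_real \<beta> * z) / of_real a))
    \<le> cmod g * cmod (of_real (1 / a - 1)) + cmod c * cmod ((z^2 * of_real t - of_real \<beta> * z) / of_real a)"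
    unfolding norm_mult[symmetric] by (rule norm_triangle_ineq)
  also have "\<dots> \<le> cmod g * (M * (1 + \<rho> + \<rho>^2) * E) + cmod c * (M * (1 + \<rho> + \<rho>^2) * E)"
    by (intro add_mono mult_left_mono coeff_g coeff_c) auto
  finally show ?thesis
    by (simp add: E_def algebra_simps)
qed

lemma gpoly_Suc_diff_le:
  assumes "0 < a (Suc n)" "1 / a (Suc n) \<le> M" "cmod z \<le> \<rho>"
  shows "cmod (gpoly a b (Suc n) z - gpoly a b n z)
    \<le> M * (1 + \<rho> + \<rho>^2) * jacobi_defect a b n * (cmod (gpoly a b n z) + cmod (cpoly a b n z))"
proof -
  have "gpoly a b (Suc n) z - gpoly a b n z = gpoly a b n z * of_real (1 / a (Suc n) - 1)
      + cpoly a b n z * ((z^2 * of_real (1 - a (Suc n)^2) - of_real (b (Suc n)) * z) / of_real (a (Suc n)))"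
    using assms(1) by (simp add: gpoly_Suc cpoly_Suc field_simps power2_eq_square)
  then show ?thesis
    using norm_jacobi_step_le[OF assms, of "1 - a (Suc n)^2"] by (simp add: jacobi_defect_def)
qed

lemma cpoly_Suc_error_le:
  assumes "0 < a (Suc n)" "1 / a (Suc n) \<le> M" "cmod z \<le> \<rho>"
  shows "cmod (cpoly a b (Suc n) z - z^2 * cpoly a b n z - gpoly a b n z)
    \<le> M * (1 + \<rho> + \<rho>^2) * jacobi_defect a b n * (cmod (gpoly a b n z) + cmod (cpoly a b n z))"
proof -
  have "cpoly a b (Suc n) z - z^2 * cpoly a b n z - gpoly a b n z = gpoly a b n z * of_real (1 / a (Suc n) - 1)
      + cpoly a b n z * ((z^2 * of_real (1 - a (Suc n)) - of_real (b (Suc n)) * z) / of_real (a (Suc n)))"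
    using assms(1) by (simp add: cpoly_Suc field_simps power2_eq_square)
  then show ?thesis
    using norm_jacobi_step_le[OF assms, of "1 - a (Suc n)"] assms(1)
      abs_one_minus_le_abs_square_minus_one[of "a (Suc n)"]
    by (simp add: jacobi_defect_def)
qed

section \<open>Uniform convergence of g_n\<close>

(* u(z; J), written as a telescoping series so that the Weierstrass M-test applies directly. *)
definition jost_fun :: "(nat \<Rightarrow> real) \<Rightarrow> (nat \<Rightarrow> real) \<Rightarrow> complex \<Rightarrow> complex" where
  "jost_fun a b z = 1 + (\<Sum>n. gpoly a b (Suc n) z - gpoly a b n z)"

lemma inverse_bounded_of_summable_jacobi_defect:
  assumes a_pos: "\<And>n. 0 < a (Suc n)" and summable: "summable (jacobi_defect a b)"
  obtains M where "\<And>n. 1 / a (Suc n) \<le> M"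
proof -
  have "(\<lambda>n. a (Suc n)^2 - 1) \<longlonglongrightarrow> 0"
    using summable_LIMSEQ_zero[OF summable]
    by (rule Lim_null_comparison[OF always_eventually, rotated]) (simp add: jacobi_defect_def)
  then have "(\<lambda>n. sqrt (a (Suc n)^2)) \<longlonglongrightarrow> sqrt 1"
    by (intro tendsto_real_sqrt) (rule LIM_zero_cancel)
  moreover have "sqrt (a (Suc n)^2) = a (Suc n)" for n
    using a_pos[of n] by simp
  ultimately have "(\<lambda>n. 1 / a (Suc n)) \<longlonglongrightarrow> 1 / 1"
    by (intro tendsto_divide) auto
  then have "Bseq (\<lambda>n. 1 / a (Suc n))"
    by (intro convergent_imp_Bseq convergentI)
  then obtain M where "\<And>n. norm (1 / a (Suc n)) \<le> M"
    by (meson BseqE)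
  then show ?thesis
    using that by (metis abs_le_D1 real_norm_def)
qed

lemma norm_gpoly_cpoly_le:
  fixes L :: "nat \<Rightarrow> real"
  assumes a_pos: "\<And>n. 0 < a (Suc n)" and M: "\<And>n. 1 / a (Suc n) \<le> M"
    and z: "cmod z \<le> \<rho>"
    and L: "\<And>m n. m \<le> n \<Longrightarrow> cmod (\<Sum>i\<le>m. (z^2)^i) \<le> L n"
    and summable: "summable (\<lambda>n. jacobi_defect a b n * (1 + L n))"
  defines "B \<equiv> exp (4 * M * (1 + \<rho> + \<rho>^2) * (\<Sum>n. jacobi_defect a b n * (1 + L n)))"
  shows "cmod (gpoly a b n z) \<le> B" and "cmod (cpoly a b n z) \<le> L n * B"
proof -
  define \<kappa> where "\<kappa> = M * (1 + \<rho> + \<rho>^2)"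
  have "0 \<le> \<rho>"
    using z norm_ge_zero order_trans by blast
  then have \<kappa>: "0 \<le> \<kappa>"
    using one_div_le_imp_nonneg[OF a_pos M] by (simp add: \<kappa>_def)
  have step: "cmod (gpoly a b (Suc k) z - gpoly a b k z) + cmod (cpoly a b (Suc k) z - z^2 * cpoly a b k z - gpoly a b k z)
      \<le> 2 * \<kappa> * jacobi_defect a b k * (cmod (gpoly a b k z) + cmod (cpoly a b k z))" for k
    using gpoly_Suc_diff_le[where a = a and b = b and n = k, OF a_pos M z]
      cpoly_Suc_error_le[where a = a and b = b and n = k, OF a_pos M z]
    by (simp add: \<kappa>_def)
  have \<eta>: "0 \<le> 2 * \<kappa> * jacobi_defect a b k" for k
    using \<kappa> jacobi_defect_nonneg[of a b k] by simp
  note bounds = norm_coupled_recurrence_le[where c = "\<lambda>k. cpoly a b k z" and g = "\<lambda>k. gpoly a b k z"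
      and w = "z^2" and L = L and \<eta> = "\<lambda>k. 2 * \<kappa> * jacobi_defect a b k", OF _ _ L \<eta> step]
  have "0 \<le> L k" for k
    using L[of 0 k] by (simp add: order_trans[OF zero_le_one])
  have "(\<Sum>k<n. 2 * (2 * \<kappa> * jacobi_defect a b k) * (1 + L k))
      = (\<Sum>k<n. 4 * \<kappa> * (jacobi_defect a b k * (1 + L k)))"
    by (intro sum.cong) (simp_all add: algebra_simps)
  also have "\<dots> \<le> (\<Sum>k. 4 * \<kappa> * (jacobi_defect a b k * (1 + L k)))"
    using summable_mult[OF summable, of "4 * \<kappa>"] \<kappa> jacobi_defect_nonneg \<open>\<And>k. 0 \<le> L k\<close>
    by (intro sum_le_suminf) auto
  also have "\<dots> = 4 * \<kappa> * (\<Sum>k. jacobi_defect a b k * (1 + L k))"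
    by (rule suminf_mult[OF summable])
  finally have "exp (\<Sum>k<n. 2 * (2 * \<kappa> * jacobi_defect a b k) * (1 + L k)) \<le> B"
    by (simp add: B_def \<kappa>_def mult.assoc)
  then show "cmod (gpoly a b n z) \<le> B" "cmod (cpoly a b n z) \<le> L n * B"
    using bounds[where n = n] \<open>0 \<le> L n\<close> by (auto intro: order_trans mult_left_mono)
qed

lemma uniform_limit_gpoly:
  fixes K :: "complex set" and L :: "nat \<Rightarrow> real"
  assumes a_pos: "\<And>n. 0 < a (Suc n)" and M: "\<And>n. 1 / a (Suc n) \<le> M"
    and K: "\<And>z. z \<in> K \<Longrightarrow> cmod z \<le> \<rho>"
    and L: "\<And>z m n. z \<in> K \<Longrightarrow> m \<le> n \<Longrightarrow> cmod (\<Sum>i\<le>m. (z^2)^i) \<le> L n"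
    and summable: "summable (\<lambda>n. jacobi_defect a b n * (1 + L n))"
  shows "uniform_limit K (gpoly a b) (jost_fun a b) sequentially"
proof -
  define \<kappa> where "\<kappa> = M * (1 + \<rho> + \<rho>^2)"
  define B where "B = exp (4 * M * (1 + \<rho> + \<rho>^2) * (\<Sum>n. jacobi_defect a b n * (1 + L n)))"
  have "cmod (gpoly a b (Suc n) z - gpoly a b n z) \<le> \<kappa> * B * (jacobi_defect a b n * (1 + L n))"
    if z: "z \<in> K" for n z
  proof -
    note bounds = norm_gpoly_cpoly_le[where a = a, OF a_pos M K[OF z] L[OF z] summable, folded B_def]
    have "0 \<le> \<rho>"
      using K[OF z] norm_ge_zero order_trans by blast
    then have "0 \<le> \<kappa>"
      using one_div_le_imp_nonneg[OF a_pos M] by (simp add: \<kappa>_def)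
    have "cmod (gpoly a b (Suc n) z - gpoly a b n z)
        \<le> \<kappa> * jacobi_defect a b n * (cmod (gpoly a b n z) + cmod (cpoly a b n z))"
      using gpoly_Suc_diff_le[where a = a and b = b and n = n, OF a_pos M K[OF z]] by (simp add: \<kappa>_def)
    also have "\<dots> \<le> \<kappa> * jacobi_defect a b n * (B + L n * B)"
      using bounds \<open>0 \<le> \<kappa>\<close> jacobi_defect_nonneg by (intro mult_left_mono add_mono) auto
    finally show ?thesis
      by (simp add: algebra_simps)
  qed
  then have "uniform_limit K (\<lambda>n z. \<Sum>i<n. gpoly a b (Suc i) z - gpoly a b i z)
      (\<lambda>z. \<Sum>i. gpoly a b (Suc i) z - gpoly a b i z) sequentially"
    by (rule Weierstrass_m_test[OF _ summable_mult[OF summable]])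
  then have "uniform_limit K (\<lambda>n z. 1 + (\<Sum>i<n. gpoly a b (Suc i) z - gpoly a b i z)) (jost_fun a b) sequentially"
    unfolding jost_fun_def by (intro uniform_limit_add uniform_limit_const)
  moreover have "1 + (\<Sum>i<n. gpoly a b (Suc i) z - gpoly a b i z) = gpoly a b n z" for n z
    by (simp add: sum_lessThan_telescope[of "\<lambda>i. gpoly a b i z"])
  ultimately show ?thesis
    by simp
qed

section \<open>Convergence under the three decay conditions\<close>

lemma uniform_limit_gpoly_off_pm1:
  fixes K :: "complex set"
  assumes a_pos: "\<And>n. 0 < a (Suc n)" and summable: "summable (jacobi_defect a b)"
    and K: "compact K" "K \<subseteq> cball 0 1 - {1, -1}"
  shows "uniform_limit K (gpoly a b) (jost_fun a b) sequentially"
proof -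
  obtain M where M: "\<And>n. 1 / a (Suc n) \<le> M"
    using inverse_bounded_of_summable_jacobi_defect[where a = a, OF a_pos summable] by blast
  have "continuous_on K (\<lambda>z. 1 - z^2)"
    by (intro continuous_intros)
  moreover have "1 - z^2 \<noteq> 0" if "z \<in> K" for z
    using that K(2) by (auto simp: power2_eq_1_iff)
  ultimately obtain d where d: "0 < d" "\<And>z. z \<in> K \<Longrightarrow> d \<le> cmod (1 - z^2)"
    using compact_norm_bounded_below[OF K(1)] by blast
  have norm_le: "cmod z \<le> 1" if "z \<in> K" for z
    using that K(2) by auto
  show ?thesis
  proof (rule uniform_limit_gpoly[where a = a and b = b and L = "\<lambda>_. 2 / d", OF a_pos M norm_le])
    show "cmod (\<Sum>i\<le>m. (z^2)^i) \<le> 2 / d" if "z \<in> K" for z m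
      using norm_geometric_sum_le_of_norm_le_1[of "z^2" d m] d norm_le[OF that] that
      by (simp add: norm_power power_le_one)
    show "summable (\<lambda>n. jacobi_defect a b n * (1 + 2 / d))"
      using summable by (rule summable_mult2)
  qed
qed

lemma cpoly_Suc_error_tendsto_0:
  assumes a_pos: "\<And>n. 0 < a (Suc n)" and summable: "summable (jacobi_defect a b)"
    and z: "cmod z < 1"
  shows "(\<lambda>n. cpoly a b (Suc n) z - z^2 * cpoly a b n z - gpoly a b n z) \<longlonglongrightarrow> 0"
proof -
  obtain M where M: "\<And>n. 1 / a (Suc n) \<le> M"
    using inverse_bounded_of_summable_jacobi_defect[where a = a, OF a_pos summable] by blast
  define d where "d = cmod (1 - z^2)"
  have z2: "cmod (z^2) < 1"
    using z by (simp add: norm_power power_less_one_iff)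
  then have "z^2 \<noteq> 1"
    by auto
  then have "0 < d"
    by (simp add: d_def)
  have L: "cmod (\<Sum>i\<le>m. (z^2)^i) \<le> 2 / d" for m
    using norm_geometric_sum_le_of_norm_le_1[of "z^2" d m] z2 \<open>0 < d\<close> by (simp add: d_def)
  define B where "B = exp (4 * M * (1 + 1 + 1^2) * (\<Sum>n. jacobi_defect a b n * (1 + 2 / d)))"
  have "cmod z \<le> 1"
    using z by simp
  note bounds = norm_gpoly_cpoly_le[where a = a and b = b and \<rho> = 1 and L = "\<lambda>_. 2 / d",
      OF a_pos M \<open>cmod z \<le> 1\<close> L summable_mult2[OF summable], folded B_def]
  have error_le: "cmod (cpoly a b (Suc n) z - z^2 * cpoly a b n z - gpoly a b n z)
      \<le> 3 * M * jacobi_defect a b n * (B + 2 / d * B)" for n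
  proof -
    have "cmod (cpoly a b (Suc n) z - z^2 * cpoly a b n z - gpoly a b n z)
        \<le> M * (1 + 1 + 1^2) * jacobi_defect a b n * (cmod (gpoly a b n z) + cmod (cpoly a b n z))"
      using cpoly_Suc_error_le[where a = a and b = b, OF a_pos M, of z 1] z by simp
    also have "\<dots> = 3 * M * jacobi_defect a b n * (cmod (gpoly a b n z) + cmod (cpoly a b n z))"
      by simp
    also have "\<dots> \<le> 3 * M * jacobi_defect a b n * (B + 2 / d * B)"
      using one_div_le_imp_nonneg[OF a_pos M] jacobi_defect_nonneg bounds
      by (intro mult_left_mono add_mono) auto
    finally show ?thesis .
  qed
  show ?thesis
  proof (rule Lim_null_comparison[OF always_eventually])
    show "\<forall>n. norm (cpoly a b (Suc n) z - z^2 * cpoly a b n z - gpoly a b n z)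
        \<le> 3 * M * jacobi_defect a b n * (B + 2 / d * B)"
      using error_le by blast
    show "(\<lambda>n. 3 * M * jacobi_defect a b n * (B + 2 / d * B)) \<longlonglongrightarrow> 0"
      using summable_LIMSEQ_zero[OF summable] by (intro tendsto_mult_left_zero tendsto_mult_right_zero)
  qed
qed

lemma cpoly_tendsto_jost_fun:
  assumes a_pos: "\<And>n. 0 < a (Suc n)" and summable: "summable (jacobi_defect a b)"
    and z: "cmod z < 1"
  shows "(\<lambda>n. cpoly a b n z) \<longlonglongrightarrow> jost_fun a b z / (1 - z^2)"
proof -
  have "{z} \<subseteq> cball 0 1 - {1, -1}"
    using z by auto
  then have "(\<lambda>n. gpoly a b n z) \<longlonglongrightarrow> jost_fun a b z"
    using tendsto_uniform_limitI[OF uniform_limit_gpoly_off_pm1[OF a_pos summable compact_sing]] by simp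
  with cpoly_Suc_error_tendsto_0[OF a_pos summable z]
  have "(\<lambda>n. (cpoly a b (Suc n) z - z^2 * cpoly a b n z - gpoly a b n z) + gpoly a b n z)
      \<longlonglongrightarrow> 0 + jost_fun a b z"
    by (rule tendsto_add)
  moreover have "cmod (z^2) < 1"
    using z by (simp add: norm_power power_less_one_iff)
  ultimately show ?thesis
    using tendsto_of_first_order_recurrence[where w = "z^2" and c = "\<lambda>n. cpoly a b n z"] by simp
qed

lemma holomorphic_jost_fun:
  assumes a_pos: "\<And>n. 0 < a (Suc n)" and summable: "summable (jacobi_defect a b)"
  shows "jost_fun a b holomorphic_on ball 0 1"
proof (rule holomorphic_uniform_sequence[OF open_ball holomorphic_gpoly])
  fix x :: complex
  assume "x \<in> ball 0 1"
  define r where "r = (1 - cmod x) / 2"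
  have "0 < r"
    using \<open>x \<in> ball 0 1\<close> by (simp add: r_def)
  have "cball x r \<subseteq> ball 0 1"
  proof
    fix y
    assume "y \<in> cball x r"
    then have "cmod y \<le> cmod x + r"
      using norm_triangle_sub[of y x] by (simp add: dist_norm norm_minus_commute)
    moreover have "cmod x < 1"
      using \<open>x \<in> ball 0 1\<close> by simp
    ultimately have "cmod y < 1"
      unfolding r_def by (simp add: field_simps)
    then show "y \<in> ball 0 1"
      by simp
  qed
  moreover have "uniform_limit (cball x r) (gpoly a b) (jost_fun a b) sequentially"
    using \<open>cball x r \<subseteq> ball 0 1\<close>
    by (intro uniform_limit_gpoly_off_pm1[OF a_pos summable compact_cball]) auto
  ultimately show "\<exists>r>0. cball x r \<subseteq> ball 0 1 \<and> uniform_limit (cball x r) (gpoly a b) (jost_fun a b) sequentially"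
    using \<open>0 < r\<close> by blast
qed

lemma continuous_on_jost_fun_off_pm1:
  assumes a_pos: "\<And>n. 0 < a (Suc n)" and summable: "summable (jacobi_defect a b)"
  shows "continuous_on (cball 0 1 - {1, -1}) (jost_fun a b)"
proof (rule continuous_on_uniform_limit_on_compacts[OF continuous_on_gpoly
      uniform_limit_gpoly_off_pm1[OF a_pos summable]])
  fix x :: complex
  assume x: "x \<in> cball 0 1 - {1, -1}"
  define \<delta> where "\<delta> = min (dist x 1) (dist x (-1)) / 2"
  have "0 < \<delta>"
    using x by (auto simp: \<delta>_def)
  moreover have "1 \<notin> cball x \<delta>" "-1 \<notin> cball x \<delta>"
    using \<open>0 < \<delta>\<close> by (auto simp: \<delta>_def)
  then have "(cball 0 1 - {1, -1}) \<inter> cball x \<delta> = cball 0 1 \<inter> cball x \<delta>"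
    by auto
  ultimately show "\<exists>\<delta>>0. compact ((cball 0 1 - {1, -1}) \<inter> cball x \<delta>)"
    by (metis compact_Int compact_cball)
qed

lemma uniform_limit_gpoly_closed_disk:
  assumes a_pos: "\<And>n. 0 < a (Suc n)"
    and summable: "summable (\<lambda>n. real (n + 1) * jacobi_defect a b n)"
  shows "uniform_limit (cball 0 1) (gpoly a b) (jost_fun a b) sequentially"
proof -
  have summable_defect: "summable (jacobi_defect a b)"
    by (rule summable_comparison_test'[OF summable])
      (use mult_right_mono[of 1 "real (_ + 1)" "jacobi_defect a b _"] jacobi_defect_nonneg in simp)
  then obtain M where M: "\<And>n. 1 / a (Suc n) \<le> M"
    using inverse_bounded_of_summable_jacobi_defect[where a = a, OF a_pos] by blast
  show ?thesis
  proof (rule uniform_limit_gpoly[where a = a and b = b and L = "\<lambda>n. real (Suc n) * 1^n", OF a_pos M])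
    show "cmod z \<le> 1" if "z \<in> cball 0 1" for z :: complex
      using that by simp
    show "cmod (\<Sum>i\<le>m. (z^2)^i) \<le> real (Suc n) * 1^n" if "z \<in> cball 0 1" "m \<le> n" for z :: complex and m n
      using that by (intro norm_geometric_sum_le_power) (auto simp: norm_power power_le_one)
    show "summable (\<lambda>n. jacobi_defect a b n * (1 + real (Suc n) * 1^n))"
      using summable_add[OF summable_defect summable] by (simp add: algebra_simps)
  qed
qed

lemma uniform_limit_gpoly_exponential_decay:
  fixes K :: "complex set"
  assumes a_pos: "\<And>n. 0 < a (Suc n)" and R: "1 < R"
    and decay: "\<forall>n\<ge>1. \<bar>b n\<bar> + \<bar>(a n)^2 - 1\<bar> \<le> C * R powr (- 2 * real n)"
    and K: "compact K" "K \<subseteq> ball 0 R"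
  shows "uniform_limit K (gpoly a b) (jost_fun a b) sequentially"
proof -
  define q where "q = 1 / R^2"
  have q: "0 \<le> q" "q < 1"
    using R by (auto simp: q_def)
  have decay_q: "jacobi_defect a b n \<le> C * q^Suc n" for n
    using decay[rule_format, of "Suc n"] powr_minus_two_mult[of R "Suc n"] R
    by (simp add: jacobi_defect_def q_def)
  have "summable (\<lambda>n. C * q * q^n)"
    using q by (intro summable_mult summable_geometric) auto
  then have "summable (jacobi_defect a b)"
    by (rule summable_comparison_test') (use decay_q jacobi_defect_nonneg in \<open>simp add: mult.assoc\<close>)
  then obtain M where M: "\<And>n. 1 / a (Suc n) \<le> M"
    using inverse_bounded_of_summable_jacobi_defect[where a = a, OF a_pos] by blast
  obtain r where "r < R" "K \<subseteq> cball 0 r"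
    using compact_subset_ball_imp_subset_smaller_cball[OF K] .
  define \<rho> where "\<rho> = max 1 r"
  have \<rho>: "1 \<le> \<rho>" "\<rho> < R" "\<And>z. z \<in> K \<Longrightarrow> cmod z \<le> \<rho>"
    using R \<open>r < R\<close> \<open>K \<subseteq> cball 0 r\<close> by (auto simp: \<rho>_def)
  have "\<rho>^2 * q < 1"
    using \<rho> R by (simp add: q_def power_strict_mono)
  show ?thesis
  proof (rule uniform_limit_gpoly[where a = a and b = b and L = "\<lambda>n. real (Suc n) * (\<rho>^2)^n", OF a_pos M \<rho>(3)])
    show "cmod (\<Sum>i\<le>m. (z^2)^i) \<le> real (Suc n) * (\<rho>^2)^n" if "z \<in> K" "m \<le> n" for z :: complex and m n
      using that \<rho> by (intro norm_geometric_sum_le_power) (auto simp: norm_power power_mono)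
    show "summable (\<lambda>n. jacobi_defect a b n * (1 + real (Suc n) * (\<rho>^2)^n))"
      using \<rho>(1) \<open>\<rho>^2 * q < 1\<close>
      by (intro summable_mult_Suc_power_weight[OF jacobi_defect_nonneg decay_q q(1)])
        auto
  qed
qed

theorem theoremA3:
  fixes a b :: "nat \<Rightarrow> real"
  assumes a_pos: "\<And>n. n \<ge> 1 \<Longrightarrow> a n > 0"
  shows
   "(summable (\<lambda>n. \<bar>b (n+1)\<bar> + \<bar>(a (n+1))^2 - 1\<bar>) \<longrightarrow>
      (\<exists>u :: complex \<Rightarrow> complex.
         (\<forall>z \<in> cball 0 1 - {1, -1}. (\<lambda>n. gpoly a b n z) \<longlonglongrightarrow> u z) \<and>
         (\<forall>K. compact K \<and> K \<subseteq> cball 0 1 - {1, -1} \<longrightarrow>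
              uniform_limit K (\<lambda>n z. gpoly a b n z) u sequentially) \<and>
         u holomorphic_on ball 0 1 \<and>
         continuous_on (cball 0 1 - {1, -1}) u \<and>
         (\<forall>z \<in> ball 0 1. (\<lambda>n. cpoly a b n z) \<longlonglongrightarrow> u z / (1 - z^2))))
  \<and>
   (summable (\<lambda>n. real (n+1) * (\<bar>b (n+1)\<bar> + \<bar>(a (n+1))^2 - 1\<bar>)) \<longrightarrow>
      (\<exists>u :: complex \<Rightarrow> complex.
         (\<forall>z \<in> cball 0 1. (\<lambda>n. gpoly a b n z) \<longlonglongrightarrow> u z) \<and>
         uniform_limit (cball 0 1) (\<lambda>n z. gpoly a b n z) u sequentially \<and>
         continuous_on (cball 0 1) u))
  \<and>
   (\<forall>C R::real. R > 1 \<and> (\<forall>n\<ge>1. \<bar>b n\<bar> + \<bar>(a n)^2 - 1\<bar> \<le> C * R powr (- 2 * real n)) \<longrightarrow>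
      (\<exists>u :: complex \<Rightarrow> complex.
         (\<forall>z \<in> ball 0 R. (\<lambda>n. gpoly a b n z) \<longlonglongrightarrow> u z) \<and>
         (\<forall>K. compact K \<and> K \<subseteq> ball 0 R \<longrightarrow>
              uniform_limit K (\<lambda>n z. gpoly a b n z) u sequentially)))"
proof -
  have a_pos': "\<And>n. 0 < a (Suc n)"
    using a_pos by simp
  have defect: "\<And>n. \<bar>b (n + 1)\<bar> + \<bar>(a (n + 1))^2 - 1\<bar> = jacobi_defect a b n"
    by (simp add: jacobi_defect_def)
  have pointwise: "(\<lambda>n. gpoly a b n z) \<longlonglongrightarrow> jost_fun a b z"
    if "uniform_limit {z} (gpoly a b) (jost_fun a b) sequentially" for z
    using that by (rule tendsto_uniform_limitI) simp
  show ?thesis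
    unfolding defect
  proof (intro conjI impI allI exI[of _ "jost_fun a b"] ballI; (elim conjE)?)
    fix z :: complex and K :: "complex set"
    assume summable: "summable (jacobi_defect a b)"
    note off_pm1 = uniform_limit_gpoly_off_pm1[of a b, OF a_pos' summable]
    show "(\<lambda>n. gpoly a b n z) \<longlonglongrightarrow> jost_fun a b z" if "z \<in> cball 0 1 - {1, -1}"
      using that by (intro pointwise off_pm1) auto
    show "uniform_limit K (gpoly a b) (jost_fun a b) sequentially"
      if "compact K" "K \<subseteq> cball 0 1 - {1, -1}"
      using that by (rule off_pm1)
    show "jost_fun a b holomorphic_on ball 0 1"
      by (rule holomorphic_jost_fun[of a b, OF a_pos' summable])
    show "continuous_on (cball 0 1 - {1, -1}) (jost_fun a b)"
      by (rule continuous_on_jost_fun_off_pm1[of a b, OF a_pos' summable])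
    show "(\<lambda>n. cpoly a b n z) \<longlonglongrightarrow> jost_fun a b z / (1 - z^2)" if "z \<in> ball 0 1"
      using that by (intro cpoly_tendsto_jost_fun[of a b, OF a_pos' summable]) simp
  next
    fix z :: complex
    assume "summable (\<lambda>n. real (n + 1) * jacobi_defect a b n)"
    note closed_disk = uniform_limit_gpoly_closed_disk[of a b, OF a_pos' this]
    then show "uniform_limit (cball 0 1) (gpoly a b) (jost_fun a b) sequentially" .
    show "(\<lambda>n. gpoly a b n z) \<longlonglongrightarrow> jost_fun a b z" if "z \<in> cball 0 1"
      using closed_disk that by (rule tendsto_uniform_limitI)
    show "continuous_on (cball 0 1) (jost_fun a b)"
      using closed_disk
      by (intro uniform_limit_theorem[where F = sequentially]) (auto intro: always_eventually continuous_on_gpoly)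
  next
    fix C R :: real and z :: complex and K :: "complex set"
    assume "1 < R" "\<forall>n\<ge>1. \<bar>b n\<bar> + \<bar>(a n)^2 - 1\<bar> \<le> C * R powr (- 2 * real n)"
    note exp_decay = uniform_limit_gpoly_exponential_decay[where a = a and b = b, OF a_pos' this]
    show "(\<lambda>n. gpoly a b n z) \<longlonglongrightarrow> jost_fun a b z" if "z \<in> ball 0 R"
      using that by (intro pointwise exp_decay) auto
    show "uniform_limit K (gpoly a b) (jost_fun a b) sequentially" if "compact K" "K \<subseteq> ball 0 R"
      using that by (rule exp_decay)
  qed
qed

end
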